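(* Let $k\geq 2$ be an integer. For integers $n\ge 0$ and $t\ge 0$ let $\mathrm{IB}_k(n,t)$ be the number of length-$n$ words over $\Sigma_k$ whose largest BP-factorization has width $t$. Then $\mathrm{IB}_k(0,0)=1$, and for every integer $n\geq 1$ we have $\mathrm{IB}_k(2n,2)=u_n$ and $\mathrm{IB}_k(n,1)=u_n$. Moreover, for all integers $n\geq 0$ and $t\geq 3$, \[ \mathrm{IB}_k(n,t)=\begin{cases} \sum_{i=1}^{(n-t)/2+1} u_{i}\, \mathrm{IB}_k(n-2i, t-2), & \text{if $n$, $t$ are both even;}\\ \sum_{i=1}^{(n-t+1)/2} u_{2i}\, \mathrm{IB}_k(n-2i,t-1), & \text{if $n$ is even and $t$ is odd;}\\ 0, & \text{if $n$ is odd and $t$ is even;}\\ \sum_{i=1}^{(n-t)/2+1}u_{2i-1}\,\mathrm{IB}_k(n-2i+1,t-1), & \text{if $n$, $t$ are both odd,} \end{cases} \] where a sum whose upper limit is less than $1$ is zero.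
   Context: $\Sigma_k=\{0,1,\ldots,k-1\}$. A border of a word $w$ is a non-empty word that is both a proper prefix and a proper suffix of $w$; $w$ is unbordered if it has no border (the empty word counts as unbordered). $u_n$ denotes the number of unbordered words of length $n$ over $\Sigma_k$; it satisfies $u_0=1$, $u_n=ku_{n-1}-u_{n/2}$ for even $n>0$, and $u_n=ku_{n-1}$ for odd $n$. A block palindrome factorization (BP-factorization) of a word $w$ is a factorization $w=w_m\cdots w_1w_0w_1\cdots w_m$ with $m\ge 0$, $w_0$ a possibly empty word and $w_1,\dots,w_m$ non-empty words. Its width is $2m+1$ if $w_0$ is non-empty and $2m$ if $w_0$ is empty (i.e., the number of non-empty blocks). A largest BP-factorization of $w$ is a BP-factorization of $w$ of maximum width; the width of the largest BP-factorization of $w$ is this maximum. *)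

theory Defs
  imports "HOL-Library.Sublist"
begin

text \<open>Words over the alphabet Sigma_k = {0,...,k-1} are lists of naturals with entries below k.\<close>

definition words :: "nat \<Rightarrow> nat \<Rightarrow> nat list set" where
  "words k n = {w. length w = n \<and> set w \<subseteq> {..<k}}"

definition is_border :: "'a list \<Rightarrow> 'a list \<Rightarrow> bool" where
  "is_border v w \<longleftrightarrow> v \<noteq> [] \<and> strict_prefix v w \<and> strict_suffix v w"

definition unbordered :: "'a list \<Rightarrow> bool" where
  "unbordered w \<longleftrightarrow> \<not> (\<exists>v. is_border v w)"

definition u :: "nat \<Rightarrow> nat \<Rightarrow> nat" where
  "u k n = card {w \<in> words k n. unbordered w}"

text \<open>A BP-factorization w = w_m ... w_1 w_0 w_1 ... w_m is encoded by the list
  ws = [w_1, ..., w_m] of non-empty blocks and the (possibly empty) centre w0.\<close>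
definition bp_fact :: "'a list \<Rightarrow> 'a list list \<Rightarrow> 'a list \<Rightarrow> bool" where
  "bp_fact w ws w0 \<longleftrightarrow> w = concat (rev ws) @ w0 @ concat ws \<and> (\<forall>b\<in>set ws. b \<noteq> [])"

definition bp_width :: "'a list list \<Rightarrow> 'a list \<Rightarrow> nat" where
  "bp_width ws w0 = 2 * length ws + (if w0 \<noteq> [] then 1 else 0)"

definition largest_bp_width :: "'a list \<Rightarrow> nat" where
  "largest_bp_width w = Max {bp_width ws w0 | ws w0. bp_fact w ws w0}"

definition IB :: "nat \<Rightarrow> nat \<Rightarrow> nat \<Rightarrow> nat" where
  "IB k n t = card {w \<in> words k n. largest_bp_width w = t}"

end

theory Submission
  imports Defs
begin

text \<open>A bordered word has a shortest border \<open>b\<close>; it is unbordered, so its two occurrences cannot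
  overlap and the word is \<open>b m b\<close>. Such a decomposition with \<open>b\<close> unbordered is unique, and peeling
  \<open>b\<close> off lowers the width of the largest BP-factorization by exactly two. Hence
  \<open>IB(n,t) = \<Sum>\<^sub>i u\<^sub>i IB(n-2i,t-2)\<close> for \<open>t \<ge> 2\<close>; unfolding this down to width one gives
  \<open>IB(n,2s+1) = \<Sum>\<^sub>c u\<^sub>c IB(n-c,2s)\<close>. The stated formulas follow by splitting the sums by parity
  and dropping the terms that vanish because the width never exceeds the length and an even width
  forces an even length.\<close>

lemma is_border_iff:
  "is_border v w \<longleftrightarrow> v \<noteq> [] \<and> length v < length w \<and> prefix v w \<and> suffix v w"
  unfolding is_border_def
  by (metis prefix_length_less prefix_order.less_le strict_suffix_def less_irrefl)

lemma is_border_trans: "is_border a b \<Longrightarrow> is_border b c \<Longrightarrow> is_border a c"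
  unfolding is_border_iff by (meson order.strict_trans prefix_order.trans suffix_order.trans)

lemma suffix_outer_block: "suffix x (x @ y @ x)"
  by (intro suffix_appendI) simp

lemma is_border_outer_block: "x \<noteq> [] \<Longrightarrow> is_border x (x @ y @ x)"
  by (simp add: is_border_iff suffix_outer_block)

lemma unbordered_prefix_suffix_eq:
  "unbordered b \<Longrightarrow> x \<noteq> [] \<Longrightarrow> prefix x b \<Longrightarrow> suffix x b \<Longrightarrow> x = b"
  unfolding unbordered_def is_border_def strict_prefix_def strict_suffix_def by blast

text \<open>An unbordered border cannot overlap itself: if its two occurrences in \<open>w\<close> overlapped, the
  overlap would be a border of it.\<close>
lemma unbordered_border_split:
  assumes "is_border b w" "unbordered b"
  shows "\<exists>y. w = b @ y @ b"
proof -
  obtain r s where b: "b \<noteq> []" "length b < length w" and w: "w = b @ r" "w = s @ b"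
    using assms(1) unfolding is_border_iff prefix_def suffix_def by blast
  have sr: "s @ b = b @ r" using w by simp
  have len_s: "length s = length r" using arg_cong[OF sr, of length] by simp
  have "length b \<le> length r"
  proof (rule ccontr)
    assume short: "\<not> length b \<le> length r"
    define x where "x = take (length b - length r) b"
    have "b = take (length b) (s @ b)" by (simp add: sr)
    then have "b = s @ x" using short len_s by (simp add: x_def)
    then have "suffix x b" by (simp add: suffixI)
    moreover have "prefix x b" by (simp add: x_def take_is_prefix)
    moreover have "x \<noteq> []" using short b(1) by (simp add: x_def)
    ultimately have "x = b" using unbordered_prefix_suffix_eq[OF assms(2)] by blast
    moreover have "length x < length b" using b w(1) short by (simp add: x_def)
    ultimately show False by simp
  qed
  moreover have "suffix b (b @ r)" by (simp only: sr[symmetric] suffixI)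
  ultimately have "suffix b r" using suffix_length_suffix suffixI by blast
  then show ?thesis using w(1) unfolding suffix_def by auto
qed

lemma bordered_split:
  assumes "\<not> unbordered w"
  obtains b y where "b \<noteq> []" "unbordered b" "w = b @ y @ b"
proof -
  obtain b where b: "is_border b w" and shortest: "\<And>v. is_border v w \<Longrightarrow> length b \<le> length v"
    using assms ex_has_least_nat[of "\<lambda>v. is_border v w" _ length] unfolding unbordered_def by metis
  have unb: "unbordered b"
    unfolding unbordered_def using shortest is_border_trans[OF _ b]
    by (metis is_border_iff not_le)
  obtain y where "w = b @ y @ b" using unbordered_border_split[OF b unb] by blast
  then show thesis using that b unb unfolding is_border_iff by blast
qed

lemma unbordered_outer_block_eq:
  assumes "b @ m @ b = x @ y @ x" "unbordered b" "x \<noteq> []" "length x \<le> length b"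
  shows "x = b \<and> y = m"
proof -
  have "prefix x (b @ m @ b)" unfolding assms(1) by simp
  then have "prefix x b" using prefix_length_prefix assms(4) by fastforce
  have "suffix x (b @ m @ b)" unfolding assms(1) by (rule suffix_outer_block)
  then have "suffix x b" using suffix_length_suffix suffix_outer_block assms(4) by blast
  then have "x = b" using unbordered_prefix_suffix_eq assms(2,3) \<open>prefix x b\<close> by blast
  then show ?thesis using assms(1) by simp
qed

lemma unbordered_outer_block_unique:
  assumes "b1 @ m1 @ b1 = b2 @ m2 @ b2" "b1 \<noteq> []" "b2 \<noteq> []" "unbordered b1" "unbordered b2"
  shows "b1 = b2 \<and> m1 = m2"
  using unbordered_outer_block_eq[OF assms(1) assms(4,3)]
    unbordered_outer_block_eq[OF assms(1)[symmetric] assms(5,2)]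
  by (cases "length b2 \<le> length b1") auto

lemma bp_fact_Nil: "bp_fact w [] w0 \<longleftrightarrow> w0 = w"
  by (auto simp: bp_fact_def)

lemma bp_fact_snoc:
  "bp_fact w (ws @ [x]) w0 \<longleftrightarrow> x \<noteq> [] \<and> (\<exists>y. w = x @ y @ x \<and> bp_fact y ws w0)"
  unfolding bp_fact_def by auto

lemma bp_width_snoc: "bp_width (ws @ [x]) w0 = bp_width ws w0 + 2"
  unfolding bp_width_def by simp

lemma length_bp_fact: "bp_fact w ws w0 \<Longrightarrow> length w = 2 * length (concat ws) + length w0"
  unfolding bp_fact_def by (simp add: length_concat sum_list_rev rev_map[symmetric])

lemma bp_width_le_length:
  assumes "bp_fact w ws w0"
  shows "bp_width ws w0 \<le> length w"
proof -
  have "\<forall>b\<in>set ws. b \<noteq> []" using assms by (simp add: bp_fact_def)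
  then have "length ws \<le> length (concat ws)"
    by (induction ws) (auto simp: Suc_le_eq neq_Nil_conv)
  then show ?thesis
    using length_bp_fact[OF assms] by (cases w0) (auto simp: bp_width_def)
qed

lemma finite_bp_widths: "finite {bp_width ws w0 | ws w0. bp_fact w ws w0}"
  by (rule finite_subset[of _ "{..length w}"]) (auto dest: bp_width_le_length)

lemma bp_width_le_largest: "bp_fact w ws w0 \<Longrightarrow> bp_width ws w0 \<le> largest_bp_width w"
  unfolding largest_bp_width_def by (rule Max_ge[OF finite_bp_widths]) blast

lemma largest_bp_fact:
  obtains ws w0 where "bp_fact w ws w0" "bp_width ws w0 = largest_bp_width w"
proof -
  have "largest_bp_width w \<in> {bp_width ws w0 | ws w0. bp_fact w ws w0}"
    unfolding largest_bp_width_def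
    by (rule Max_in[OF finite_bp_widths]) (use bp_fact_Nil in blast)
  then show thesis using that by auto
qed

lemma largest_bp_width_le_length: "largest_bp_width w \<le> length w"
  by (metis largest_bp_fact bp_width_le_length)

lemma largest_bp_width_Nil: "largest_bp_width [] = 0"
  using largest_bp_width_le_length[of "[]"] by simp

lemma largest_bp_width_pos: "w \<noteq> [] \<Longrightarrow> 1 \<le> largest_bp_width w"
  using bp_width_le_largest[of w "[]" w] by (simp add: bp_fact_Nil bp_width_def)

lemma even_length_if_even_largest_bp_width:
  assumes "even (largest_bp_width w)"
  shows "even (length w)"
proof -
  obtain ws w0 where f: "bp_fact w ws w0" "bp_width ws w0 = largest_bp_width w"
    by (rule largest_bp_fact)
  then have "w0 = []" using assms f(2)[symmetric] by (auto simp: bp_width_def split: if_splits)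
  then show ?thesis using length_bp_fact[OF f(1)] by simp
qed

lemma largest_bp_width_unbordered:
  assumes "w \<noteq> []" "unbordered w"
  shows "largest_bp_width w = 1"
proof -
  obtain ws w0 where f: "bp_fact w ws w0" "bp_width ws w0 = largest_bp_width w"
    by (rule largest_bp_fact)
  show ?thesis
  proof (cases ws rule: rev_exhaust)
    case Nil
    then show ?thesis using f assms(1) by (simp add: bp_fact_Nil bp_width_def)
  next
    case (snoc ws' x)
    then obtain y where "x \<noteq> []" "w = x @ y @ x" using f(1) bp_fact_snoc by blast
    then have "is_border x w" by (simp add: is_border_outer_block)
    then show ?thesis using assms(2) unfolding unbordered_def by blast
  qed
qed

lemma largest_bp_width_long_outer_block:
  assumes "b \<noteq> []" "unbordered b" "b @ m @ b = x @ y @ x" "length b < length x"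
    and "bp_fact y ws w0"
  shows "bp_width ws w0 + 2 \<le> largest_bp_width m"
proof -
  have "prefix x (b @ m @ b)" unfolding assms(3) by simp
  then have "prefix b x" using prefix_length_prefix[of b "b @ m @ b" x] assms(4) by simp
  have "suffix x (b @ m @ b)" unfolding assms(3) by (rule suffix_outer_block)
  then have "suffix b x"
    using suffix_length_suffix[of b "b @ m @ b" x] suffix_outer_block[of b m] assms(4) by simp
  with \<open>prefix b x\<close> have "is_border b x" using assms(1,4) by (simp add: is_border_iff)
  then obtain z where "x = b @ z @ b" using unbordered_border_split assms(2) by blast
  then have m: "m = z @ (b @ y @ b) @ z" using assms(3) by simp
  have fb: "bp_fact (b @ y @ b) (ws @ [b]) w0" using bp_fact_snoc assms(1,5) by blast
  show ?thesis
  proof (cases "z = []")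
    case True
    then show ?thesis using m bp_width_le_largest[OF fb] by (simp add: bp_width_snoc)
  next
    case False
    then have "bp_fact m ((ws @ [b]) @ [z]) w0" using bp_fact_snoc fb m by blast
    from bp_width_le_largest[OF this] show ?thesis
      unfolding bp_width_snoc[of "ws @ [b]"] bp_width_snoc by simp
  qed
qed

text \<open>The outermost block \<open>x\<close> of a largest factorisation of \<open>b m b\<close> is either \<open>b\<close> itself or, being
  longer, has the form \<open>b z b\<close>; then \<open>m = z (b y b) z\<close> has a factorisation at least as wide.\<close>
lemma largest_bp_width_peel:
  assumes "b \<noteq> []" "unbordered b"
  shows "largest_bp_width (b @ m @ b) = largest_bp_width m + 2"
proof (rule antisym)
  obtain ws w0 where f: "bp_fact m ws w0" "bp_width ws w0 = largest_bp_width m"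
    by (rule largest_bp_fact)
  then have "bp_fact (b @ m @ b) (ws @ [b]) w0" using bp_fact_snoc assms(1) by blast
  from bp_width_le_largest[OF this] show "largest_bp_width m + 2 \<le> largest_bp_width (b @ m @ b)"
    using f(2) by (simp add: bp_width_snoc)
next
  obtain ws w0 where f: "bp_fact (b @ m @ b) ws w0" "bp_width ws w0 = largest_bp_width (b @ m @ b)"
    by (rule largest_bp_fact)
  show "largest_bp_width (b @ m @ b) \<le> largest_bp_width m + 2"
  proof (cases ws rule: rev_exhaust)
    case Nil
    then show ?thesis using f by (simp add: bp_width_def split: if_splits)
  next
    case (snoc ws' x)
    then obtain y where xy: "x \<noteq> []" "b @ m @ b = x @ y @ x" "bp_fact y ws' w0"
      using f(1) bp_fact_snoc by blast
    have width: "largest_bp_width (b @ m @ b) = bp_width ws' w0 + 2"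
      using f(2) snoc by (simp add: bp_width_snoc)
    show ?thesis
    proof (cases "length x \<le> length b")
      case True
      then have "y = m" using unbordered_outer_block_eq[OF xy(2) assms(2) xy(1)] by simp
      then show ?thesis using width bp_width_le_largest[OF xy(3)] by simp
    next
      case False
      then show ?thesis
        using largest_bp_width_long_outer_block[OF assms xy(2) _ xy(3)] width by simp
    qed
  qed
qed

lemma largest_bp_width_eq_1_iff:
  assumes "w \<noteq> []"
  shows "largest_bp_width w = 1 \<longleftrightarrow> unbordered w"
proof
  assume width: "largest_bp_width w = 1"
  show "unbordered w"
  proof (rule ccontr)
    assume "\<not> unbordered w"
    then obtain b y where "b \<noteq> []" "unbordered b" "w = b @ y @ b" by (rule bordered_split)
    then show False using width largest_bp_width_peel by fastforce
  qed
qed (use largest_bp_width_unbordered assms in blast)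

lemma largest_bp_width_split:
  assumes "2 \<le> largest_bp_width w"
  obtains b m where "b \<noteq> []" "unbordered b" "w = b @ m @ b"
    "largest_bp_width m = largest_bp_width w - 2"
proof -
  have "w \<noteq> []" using assms by (auto simp: largest_bp_width_Nil)
  then have "\<not> unbordered w" using assms largest_bp_width_unbordered by force
  then obtain b m where bm: "b \<noteq> []" "unbordered b" "w = b @ m @ b" by (rule bordered_split)
  then have "largest_bp_width m = largest_bp_width w - 2" using largest_bp_width_peel[of b m] by simp
  with bm show thesis by (rule that)
qed

lemma finite_words: "finite (words k n)"
  using finite_lists_length_eq[of "{..<k}" n] unfolding words_def by (simp add: conj_commute)

lemma IB_eq_0I:
  assumes "\<And>w :: nat list. length w = n \<Longrightarrow> largest_bp_width w \<noteq> t"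
  shows "IB k n t = 0"
proof -
  have "{w \<in> words k n. largest_bp_width w = t} = {}" using assms by (auto simp: words_def)
  then show ?thesis unfolding IB_def by (simp only: card.empty)
qed

lemma IB_width_0: "IB k n 0 = (if n = 0 then 1 else 0)"
proof (cases "n = 0")
  case True
  then have "{w \<in> words k n. largest_bp_width w = 0} = {[]}"
    unfolding words_def using largest_bp_width_Nil by auto
  then show ?thesis using True unfolding IB_def by simp
next
  case False
  have "IB k n 0 = 0" by (rule IB_eq_0I) (use False largest_bp_width_pos in fastforce)
  then show ?thesis using False by simp
qed

lemma IB_width_1:
  assumes "1 \<le> n"
  shows "IB k n 1 = u k n"
proof -
  have "{w \<in> words k n. largest_bp_width w = 1} = {w \<in> words k n. unbordered w}"
    using assms by (intro Collect_cong conj_cong refl largest_bp_width_eq_1_iff) (auto simp: words_def)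
  then show ?thesis by (simp add: IB_def u_def)
qed

lemma IB_eq_0_if_length_less:
  assumes "n < t"
  shows "IB k n t = 0"
proof (rule IB_eq_0I)
  fix w :: "nat list"
  assume "length w = n"
  then show "largest_bp_width w \<noteq> t" using assms largest_bp_width_le_length[of w] by simp
qed

lemma IB_odd_length_even_width: "odd n \<Longrightarrow> even t \<Longrightarrow> IB k n t = 0"
  by (rule IB_eq_0I) (use even_length_if_even_largest_bp_width in fastforce)

lemma IB_peel:
  assumes "2 \<le> t"
  shows "IB k n t = (\<Sum>i\<in>{1..n div 2}. u k i * IB k (n - 2*i) (t - 2))"
proof -
  define U where "U i = {b \<in> words k i. unbordered b}" for i
  define S where "S n t = {w \<in> words k n. largest_bp_width w = t}" for n t
  define A where "A = (SIGMA i:{1..n div 2}. U i \<times> S (n - 2*i) (t - 2))"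
  define glue :: "nat \<times> nat list \<times> nat list \<Rightarrow> nat list" where "glue = (\<lambda>(_, b, m). b @ m @ b)"
  have "S n t \<subseteq> glue ` A"
  proof
    fix w assume "w \<in> S n t"
    then have w: "length w = n" "set w \<subseteq> {..<k}" "largest_bp_width w = t"
      unfolding S_def words_def by auto
    then obtain b m where bm: "b \<noteq> []" "unbordered b" "w = b @ m @ b" "largest_bp_width m = t - 2"
      using assms by (metis largest_bp_width_split)
    have "b \<in> U (length b)" using bm w by (auto simp: U_def words_def)
    moreover have "m \<in> S (n - 2 * length b) (t - 2)" using bm w by (auto simp: S_def words_def)
    moreover have "length b \<in> {1..n div 2}" using bm w by (auto simp: Suc_le_eq)
    ultimately have "(length b, b, m) \<in> A" by (simp add: A_def)
    then show "w \<in> glue ` A" by (rule image_eqI[rotated]) (simp add: glue_def bm(3))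
  qed
  moreover have "glue ` A \<subseteq> S n t"
  proof
    fix w assume "w \<in> glue ` A"
    then obtain i b m where w: "w = b @ m @ b" and i: "i \<in> {1..n div 2}" and b: "b \<in> U i"
      and m: "m \<in> S (n - 2 * i) (t - 2)"
      by (auto simp: glue_def A_def)
    have "b \<noteq> []" "unbordered b" using i b by (auto simp: U_def words_def)
    then have "largest_bp_width w = t" using w m assms largest_bp_width_peel[of b m] by (simp add: S_def)
    then show "w \<in> S n t" using w i b m by (auto simp: S_def U_def words_def)
  qed
  ultimately have img: "S n t = glue ` A" by blast
  have "inj_on glue A"
  proof (rule inj_onI)
    fix p q assume pq: "p \<in> A" "q \<in> A" "glue p = glue q"
    obtain i b m j b' m' where p: "p = (i, b, m)" and q: "q = (j, b', m')" by (cases p, cases q)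
    have "b \<noteq> []" "unbordered b" "length b = i" "b' \<noteq> []" "unbordered b'" "length b' = j"
      using pq(1,2) by (auto simp: p q A_def U_def words_def)
    moreover have "b @ m @ b = b' @ m' @ b'" using pq(3) by (simp add: p q glue_def)
    ultimately show "p = q" using unbordered_outer_block_unique[of b m b' m'] by (auto simp: p q)
  qed
  then have "IB k n t = card A" unfolding IB_def img[unfolded S_def] by (rule card_image)
  also have "\<dots> = (\<Sum>i\<in>{1..n div 2}. card (U i) * card (S (n - 2*i) (t - 2)))"
    unfolding A_def by (simp add: card_cartesian_product U_def S_def finite_words)
  finally show ?thesis unfolding U_def S_def u_def IB_def .
qed

lemma IB_width_2:
  assumes "1 \<le> n"
  shows "IB k (2*n) 2 = u k n"
proof -
  have "IB k (2*n) 2 = (\<Sum>i\<in>{1..n}. u k i * IB k (2*n - 2*i) 0)"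
    using IB_peel[of 2 k "2*n"] by simp
  also have "\<dots> = (\<Sum>i\<in>{1..n}. if i = n then u k n else 0)"
    by (rule sum.cong) (auto simp: IB_width_0)
  finally show ?thesis using assms by simp
qed

text \<open>Unfolding one peeling step on either side gives the same double sum over the pairs \<open>(i, c)\<close>
  with \<open>2i + c \<le> n\<close>.\<close>
lemma IB_odd_width: "IB k n (2*s + 1) = (\<Sum>c\<in>{1..n}. u k c * IB k (n - c) (2*s))"
proof (induction s arbitrary: n)
  case 0
  show ?case
  proof (cases "n = 0")
    case True
    then show ?thesis by (simp add: IB_eq_0_if_length_less)
  next
    case False
    have "(\<Sum>c\<in>{1..n}. u k c * IB k (n - c) (2*0)) = (\<Sum>c\<in>{1..n}. if c = n then u k n else 0)"
      by (rule sum.cong) (auto simp: IB_width_0)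
    then show ?thesis using False IB_width_1[of n k] by simp
  qed
next
  case (Suc s)
  define g where "g i c = u k i * u k c * IB k (n - (2*i + c)) (2*s)" for i c
  have "IB k n (2 * Suc s + 1) = (\<Sum>i\<in>{1..n div 2}. u k i * IB k (n - 2*i) (2*s + 1))"
    using IB_peel[of "2 * Suc s + 1" k n] by simp
  also have "\<dots> = (\<Sum>i\<in>{1..n div 2}. \<Sum>c\<in>{c \<in> {1..n}. 2*i + c \<le> n}. g i c)"
  proof (rule sum.cong[OF refl])
    fix i
    have "{c \<in> {1..n}. 2*i + c \<le> n} = {1..n - 2*i}" by auto
    then show "u k i * IB k (n - 2*i) (2*s + 1) = (\<Sum>c\<in>{c \<in> {1..n}. 2*i + c \<le> n}. g i c)"
      using Suc.IH[of "n - 2*i"] by (simp add: sum_distrib_left g_def mult.assoc)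
  qed
  also have "\<dots> = (\<Sum>c\<in>{1..n}. \<Sum>i\<in>{i \<in> {1..n div 2}. 2*i + c \<le> n}. g i c)"
    by (rule sum.swap_restrict) simp_all
  also have "\<dots> = (\<Sum>c\<in>{1..n}. u k c * IB k (n - c) (2 * Suc s))"
  proof (rule sum.cong[OF refl])
    fix c
    have "{i \<in> {1..n div 2}. 2*i + c \<le> n} = {1..(n - c) div 2}" by auto
    then show "(\<Sum>i\<in>{i \<in> {1..n div 2}. 2*i + c \<le> n}. g i c) = u k c * IB k (n - c) (2 * Suc s)"
      using IB_peel[of "2 * Suc s" k "n - c"] by (simp add: sum_distrib_left g_def ac_simps)
  qed
  finally show ?case .
qed

lemma sum_atLeast1_split_parity:
  fixes f :: "nat \<Rightarrow> 'a::comm_monoid_add"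
  shows "(\<Sum>c\<in>{1..n}. f c) = (\<Sum>i\<in>{1..n div 2}. f (2*i)) + (\<Sum>i\<in>{1..(n+1) div 2}. f (2*i - 1))"
proof (induction n)
  case 0
  then show ?case by simp
next
  case (Suc n)
  show ?case
  proof (cases "even n")
    case True
    then have "Suc n div 2 = n div 2" "(Suc n + 1) div 2 = Suc ((n + 1) div 2)"
      "2 * Suc ((n + 1) div 2) - 1 = Suc n" by auto
    then show ?thesis using Suc.IH by (simp add: ac_simps)
  next
    case False
    then have "Suc n div 2 = Suc (n div 2)" "(Suc n + 1) div 2 = (n + 1) div 2"
      "2 * Suc (n div 2) = Suc n" by auto
    then show ?thesis using Suc.IH by (simp add: ac_simps)
  qed
qed

lemma sum_atLeast1_truncate:
  fixes f :: "nat \<Rightarrow> 'a::comm_monoid_add"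
  assumes "M \<le> N" "\<And>i. M < i \<Longrightarrow> i \<le> N \<Longrightarrow> f i = 0"
  shows "(\<Sum>i\<in>{1..N}. f i) = (\<Sum>i\<in>{1..M}. f i)"
  by (rule sum.mono_neutral_right) (use assms in auto)

lemma IB_even_width:
  assumes "2 \<le> t"
  shows "IB k n t = (\<Sum>i\<in>{1..(n + 2 - t) div 2}. u k i * IB k (n - 2*i) (t - 2))"
proof -
  have "IB k n t = (\<Sum>i\<in>{1..n div 2}. u k i * IB k (n - 2*i) (t - 2))"
    using IB_peel[OF assms] .
  also have "\<dots> = (\<Sum>i\<in>{1..(n + 2 - t) div 2}. u k i * IB k (n - 2*i) (t - 2))"
  proof (rule sum_atLeast1_truncate)
    fix i assume "(n + 2 - t) div 2 < i" "i \<le> n div 2"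
    then have "n - 2*i < t - 2" by linarith
    then show "u k i * IB k (n - 2*i) (t - 2) = 0" by (simp add: IB_eq_0_if_length_less)
  qed (use assms in linarith)
  finally show ?thesis .
qed

lemma IB_even_length_odd_width:
  assumes "even n" "odd t"
  shows "IB k n t = (\<Sum>i\<in>{1..(n + 1 - t) div 2}. u k (2*i) * IB k (n - 2*i) (t - 1))"
proof -
  obtain s where t: "t = 2*s + 1" using assms(2) by (rule oddE)
  have odd_terms: "(\<Sum>i\<in>{1..(n + 1) div 2}. u k (2*i - 1) * IB k (n - (2*i - 1)) (2*s)) = 0"
  proof (intro sum.neutral ballI)
    fix i assume "i \<in> {1..(n + 1) div 2}"
    then have "odd (n - (2*i - 1))" using assms(1) by auto
    then show "u k (2*i - 1) * IB k (n - (2*i - 1)) (2*s) = 0" by (simp add: IB_odd_length_even_width)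
  qed
  have "IB k n t = (\<Sum>i\<in>{1..n div 2}. u k (2*i) * IB k (n - 2*i) (2*s))"
    using IB_odd_width[of k n s] sum_atLeast1_split_parity[of "\<lambda>c. u k c * IB k (n - c) (2*s)"]
    by (simp only: t odd_terms add_0_right)
  also have "\<dots> = (\<Sum>i\<in>{1..(n + 1 - t) div 2}. u k (2*i) * IB k (n - 2*i) (2*s))"
  proof (rule sum_atLeast1_truncate)
    fix i assume "(n + 1 - t) div 2 < i" "i \<le> n div 2"
    then have "n - 2*i < 2*s" using t by linarith
    then show "u k (2*i) * IB k (n - 2*i) (2*s) = 0" by (simp add: IB_eq_0_if_length_less)
  qed (use t in linarith)
  finally show ?thesis using t by simp
qed

lemma IB_odd_length_odd_width:
  assumes "odd n" "odd t" "3 \<le> t"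
  shows "IB k n t = (\<Sum>i\<in>{1..(n + 2 - t) div 2}. u k (2*i - 1) * IB k (n - 2*i + 1) (t - 1))"
proof -
  obtain s where t: "t = 2*s + 1" using assms(2) by (rule oddE)
  have even_terms: "(\<Sum>i\<in>{1..n div 2}. u k (2*i) * IB k (n - 2*i) (2*s)) = 0"
  proof (intro sum.neutral ballI)
    fix i assume "i \<in> {1..n div 2}"
    then have "odd (n - 2*i)" using assms(1) by auto
    then show "u k (2*i) * IB k (n - 2*i) (2*s) = 0" by (simp add: IB_odd_length_even_width)
  qed
  have "IB k n t = (\<Sum>i\<in>{1..(n + 1) div 2}. u k (2*i - 1) * IB k (n - (2*i - 1)) (2*s))"
    using IB_odd_width[of k n s] sum_atLeast1_split_parity[of "\<lambda>c. u k c * IB k (n - c) (2*s)"]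
    by (simp only: t even_terms add_0_left)
  also have "\<dots> = (\<Sum>i\<in>{1..(n + 2 - t) div 2}. u k (2*i - 1) * IB k (n - (2*i - 1)) (2*s))"
  proof (rule sum_atLeast1_truncate)
    fix i assume "(n + 2 - t) div 2 < i" "i \<le> (n + 1) div 2"
    then have "n - (2*i - 1) < 2*s" using t by linarith
    then show "u k (2*i - 1) * IB k (n - (2*i - 1)) (2*s) = 0" by (simp add: IB_eq_0_if_length_less)
  qed (use t in linarith)
  also have "\<dots> = (\<Sum>i\<in>{1..(n + 2 - t) div 2}. u k (2*i - 1) * IB k (n - 2*i + 1) (2*s))"
  proof (rule sum.cong[OF refl])
    fix i assume "i \<in> {1..(n + 2 - t) div 2}"
    then have "n - (2*i - 1) = n - 2*i + 1" using assms t by auto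
    then show "u k (2*i - 1) * IB k (n - (2*i - 1)) (2*s) = u k (2*i - 1) * IB k (n - 2*i + 1) (2*s)"
      by simp
  qed
  finally show ?thesis using t by simp
qed

lemma nat_int_diff_div2_add1: "nat ((int n - int t) div 2 + 1) = (n + 2 - t) div 2"
  by (simp add: nat_eq_iff; presburger)

lemma nat_int_diff_add1_div2: "nat ((int n - int t + 1) div 2) = (n + 1 - t) div 2"
  by (simp add: nat_eq_iff; presburger)

theorem theorem2:
  fixes k :: nat
  assumes "k \<ge> 2"
  shows "IB k 0 0 = 1 \<and>
    (\<forall>n\<ge>1. IB k (2*n) 2 = u k n) \<and>
    (\<forall>n\<ge>1. IB k n 1 = u k n) \<and>
    (\<forall>n t. t \<ge> 3 \<longrightarrow>
           IB k n t =
             (if even n \<and> even t then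
                (\<Sum>i\<in>{1..nat ((int n - int t) div 2 + 1)}. u k i * IB k (n - 2*i) (t - 2))
              else if even n \<and> odd t then
                (\<Sum>i\<in>{1..nat ((int n - int t + 1) div 2)}. u k (2*i) * IB k (n - 2*i) (t - 1))
              else if odd n \<and> even t then 0
              else
                (\<Sum>i\<in>{1..nat ((int n - int t) div 2 + 1)}. u k (2*i - 1) * IB k (n - 2*i + 1) (t - 1))))"
proof (intro conjI allI impI)
  show "IB k 0 0 = 1" by (simp add: IB_width_0)
next
  fix n :: nat
  assume "n \<ge> 1"
  then show "IB k (2*n) 2 = u k n" by (rule IB_width_2)
next
  fix n :: nat
  assume "n \<ge> 1"
  then show "IB k n 1 = u k n" by (rule IB_width_1)
next
  fix n t :: nat
  assume t: "t \<ge> 3"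
  consider "even n" "even t" | "even n" "odd t" | "odd n" "even t" | "odd n" "odd t" by blast
  then show "IB k n t = (if even n \<and> even t then
                (\<Sum>i\<in>{1..nat ((int n - int t) div 2 + 1)}. u k i * IB k (n - 2*i) (t - 2))
              else if even n \<and> odd t then
                (\<Sum>i\<in>{1..nat ((int n - int t + 1) div 2)}. u k (2*i) * IB k (n - 2*i) (t - 1))
              else if odd n \<and> even t then 0
              else
                (\<Sum>i\<in>{1..nat ((int n - int t) div 2 + 1)}. u k (2*i - 1) * IB k (n - 2*i + 1) (t - 1)))"
  proof cases
    case 1
    then show ?thesis using t unfolding nat_int_diff_div2_add1 by (simp add: IB_even_width)
  next
    case 2
    then show ?thesis unfolding nat_int_diff_add1_div2 by (simp add: IB_even_length_odd_width)
  next
    case 3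
    then show ?thesis by (simp add: IB_odd_length_even_width)
  next
    case 4
    then show ?thesis using t unfolding nat_int_diff_div2_add1 by (simp add: IB_odd_length_odd_width)
  qed
qed

end
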